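(* The map $\omega:(\Xi,d')\to(\Xi,d')$, $\omega([(L,v)])=[(\omega(L),v)]$, is continuous.
   Context: Combinatorial tiling: 2-dimensional CW-complex homeomorphic to the open unit disk. Decorated subdivision: a decorated pentagon has boundary vertices $v_1,\dots,v_5$ in cyclic order (indices mod 5), corner $v_i$ labelled $i$; $\omega$ adds $m_i$ inside edge $v_iv_{i+1}$, interior vertices $c_1,\dots,c_5$, edges $c_ic_{i+1}$, $c_im_i$, and replaces the face by the central pentagon $c_1\cdots c_5$ (label $i+1$ at $c_i$) and petals $v_i\,m_i\,c_i\,c_{i-1}\,m_{i-1}$ labelled $i,i+1,i+2,i+3,i+4$ (mod 5). $K_0$ is one decorated pentagon, $K_n=\omega^n(K_0)$ embeds label-preservingly onto the central superpentagon $\omega^n(\text{central face of }\omega(K_0))$ of $K_{n+1}$, and $K$ is the direct limit. Isomorphisms are cell-preserving label-preserving bijections. A patch is a finite subcomplex that is a union of faces connected through chains of faces sharing edges. $L$ is locally isomorphic to $K$ if every patch of $L$ is isomorphic to a patch of $K$. $\Xi$ is the set of isomorphism classes $[(L,v)]$ with $L$ locally isomorphic to $K$ and $v$ a vertex of $L$; $\omega(L)$ applies $\omega$ to every face of $L$. $B(v,n,L)$ is the subcomplex of faces all of whose vertices are at edge-path distance $\le n$ from $v$. $d'([(L,v)],[(L',v')])=\min(1/n,1)$ with $n$ the greatest radius such that some isomorphism $B(v,n,L)\to B(v',n,L')$ sends $v$ to $v'$ ($d'=0$ if for all $n$). *)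

theory Defs
  imports "HOL-Analysis.Analysis" "HOL-Library.Multiset"
begin

text \<open>A complex is represented by its set of faces.  Every face is a decorated
pentagon, given as the list of its 5 distinct boundary vertices in cyclic order;
the vertex at list position k carries the corner label k+1.  Edges are the pairs
of cyclically consecutive corners of a face.\<close>

type_synonym 'v cplx = "'v list set"

definition pface :: "'v list \<Rightarrow> bool" where
  "pface f \<longleftrightarrow> length f = 5 \<and> distinct f"

definition wf_cplx :: "'v cplx \<Rightarrow> bool" where
  "wf_cplx C \<longleftrightarrow> (\<forall>f\<in>C. pface f)"

definition verts :: "'v cplx \<Rightarrow> 'v set" where
  "verts C = (\<Union>f\<in>C. set f)"

definition fedges :: "'v list \<Rightarrow> 'v set set" where
  "fedges f = {{f ! k, f ! (Suc k mod 5)} | k. k < 5}"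

definition edges :: "'v cplx \<Rightarrow> 'v set set" where
  "edges C = (\<Union>f\<in>C. fedges f)"

definition cplx_iso :: "('a \<Rightarrow> 'b) \<Rightarrow> 'a cplx \<Rightarrow> 'b cplx \<Rightarrow> bool" where
  "cplx_iso \<phi> C D \<longleftrightarrow> inj_on \<phi> (verts C) \<and> (map \<phi>) ` C = D"

definition isomorphic :: "'a cplx \<Rightarrow> 'b cplx \<Rightarrow> bool" where
  "isomorphic C D \<longleftrightarrow> (\<exists>\<phi>. cplx_iso \<phi> C D)"

definition patch :: "'v cplx \<Rightarrow> 'v cplx \<Rightarrow> bool" where
  "patch P L \<longleftrightarrow> P \<subseteq> L \<and> finite P \<and> P \<noteq> {} \<and>
     (\<forall>f\<in>P. \<forall>g\<in>P. (f, g) \<in> ({(a, b). a \<in> P \<and> b \<in> P \<and> fedges a \<inter> fedges b \<noteq> {}})\<^sup>*)"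

text \<open>Vertices of \<omega>(L): old vertices, one midpoint per edge (named by the
multiset of its endpoints), and five interior vertices per face.
For a face f = [v1,...,v5] (v(i) at position i-1), \<open>SCen f i\<close> (i<5) is the
paper's c(i+1) and \<open>SMid {#a,b#}\<close> is the midpoint of edge ab.\<close>

datatype 'v sv = SOld 'v | SMid "'v multiset" | SCen "'v list" nat

definition central :: "'v list \<Rightarrow> 'v sv list" where
  "central f = map (\<lambda>p. SCen f ((p + 4) mod 5)) [0..<5]"

text \<open>Petal at corner v(i+1) (i<5): v(i+1) m(i+1) c(i+1) c(i) m(i), labelled
i+1,...,i+5 (mod 5), placed at the list positions of those labels.\<close>

definition petal :: "'v list \<Rightarrow> nat \<Rightarrow> 'v sv list" where
  "petal f i = rotate (5 - i)
     [SOld (f ! i), SMid {# f ! i, f ! (Suc i mod 5) #}, SCen f i,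
      SCen f ((i + 4) mod 5), SMid {# f ! ((i + 4) mod 5), f ! i #}]"

definition omega :: "'v cplx \<Rightarrow> 'v sv cplx" where
  "omega C = central ` C \<union> {petal f i | f i. f \<in> C \<and> i < 5}"

datatype vtx = Base nat | Sub "vtx sv"

definition omegaK :: "vtx cplx \<Rightarrow> vtx cplx" where
  "omegaK C = map Sub ` omega C"

definition K0face :: "vtx list" where
  "K0face = map Base [0..<5]"

definition Kn :: "nat \<Rightarrow> vtx cplx" where
  "Kn n = (omegaK ^^ n) {K0face}"

text \<open>Embedding K_0 \<rightarrow> K_1 onto the central face of \<omega>(K_0) (label preserving),
and K_n \<rightarrow> K_(n+1) obtained by applying \<omega>^n to it.\<close>

definition j0 :: "vtx \<Rightarrow> vtx" where
  "j0 x = (case x of Base k \<Rightarrow> Sub (SCen K0face ((k + 4) mod 5)) | Sub s \<Rightarrow> x)"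

definition liftj :: "(vtx \<Rightarrow> vtx) \<Rightarrow> vtx \<Rightarrow> vtx" where
  "liftj \<phi> x = (case x of Base k \<Rightarrow> Base k | Sub s \<Rightarrow> Sub (map_sv \<phi> s))"

definition jmap :: "nat \<Rightarrow> vtx \<Rightarrow> vtx" where
  "jmap n = (liftj ^^ n) j0"

primrec Jk :: "nat \<Rightarrow> nat \<Rightarrow> vtx \<Rightarrow> vtx" where
  "Jk n 0 = id"
| "Jk n (Suc k) = jmap (n + k) \<circ> Jk n k"

text \<open>Direct limit: a vertex of K is the class of (n, x), x a vertex of K_n,
under (n,x) ~ (m,y) iff they become equal in some K_N.\<close>

definition dlcls :: "nat \<Rightarrow> vtx \<Rightarrow> (nat \<times> vtx) set" where
  "dlcls n x = {(m, y). \<exists>N. n \<le> N \<and> m \<le> N \<and> Jk n (N - n) x = Jk m (N - m) y}"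

definition K :: "(nat \<times> vtx) set cplx" where
  "K = {map (dlcls n) f | n f. f \<in> Kn n}"

definition loc_iso_K :: "'v cplx \<Rightarrow> bool" where
  "loc_iso_K L \<longleftrightarrow> (\<forall>P. patch P L \<longrightarrow> (\<exists>Q. patch Q K \<and> isomorphic P Q))"

definition pcorner :: "nat \<Rightarrow> complex" where
  "pcorner k = cis (2 * pi * real k / 5)"

definition pentagon :: "complex set" where
  "pentagon = convex hull (pcorner ` {0..<5})"

text \<open>Gluing data: a point on the boundary of face f is named by its position on
the edge (barycentric weights on the endpoint vertices, by arc length); interior
points are named by (face, point).\<close>

definition bweight :: "'v list \<Rightarrow> complex \<Rightarrow> 'v \<Rightarrow> real" where
  "bweight f p =
    (let k = (SOME k. k < 5 \<and> p \<in> closed_segment (pcorner k) (pcorner (Suc k)));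
         t = dist (pcorner k) p / dist (pcorner k) (pcorner (Suc k))
     in (\<lambda>w. (if w = f ! k then 1 - t else 0) + (if w = f ! (Suc k mod 5) then t else 0)))"

definition pkey :: "'v list \<Rightarrow> complex \<Rightarrow> ('v list \<times> complex) + ('v \<Rightarrow> real)" where
  "pkey f p = (if \<exists>k<5. p \<in> closed_segment (pcorner k) (pcorner (Suc k))
               then Inr (bweight f p) else Inl (f, p))"

definition realisation_map :: "'v list \<times> complex \<Rightarrow> ('v list \<times> complex) + ('v \<Rightarrow> real)" where
  "realisation_map = (\<lambda>(f, p). pkey f p)"

text \<open>L is a combinatorial tiling: its CW realisation (quotient of the disjoint
union of closed pentagons by the boundary identifications) is homeomorphic to
the open unit disk.\<close>

definition tiling :: "'v cplx \<Rightarrow> bool" where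
  "tiling L \<longleftrightarrow> wf_cplx L \<and>
     (\<exists>Y. quotient_map (sum_topology (\<lambda>f. top_of_set pentagon) L) Y realisation_map \<and>
          Y homeomorphic_space (top_of_set (ball (0::complex) 1)))"

definition inXi :: "'v cplx \<Rightarrow> 'v \<Rightarrow> bool" where
  "inXi L v \<longleftrightarrow> tiling L \<and> loc_iso_K L \<and> v \<in> verts L"

definition edge_rel :: "'v cplx \<Rightarrow> ('v \<times> 'v) set" where
  "edge_rel L = {(a, b). {a, b} \<in> edges L}"

definition edist_le :: "'v cplx \<Rightarrow> 'v \<Rightarrow> 'v \<Rightarrow> nat \<Rightarrow> bool" where
  "edist_le L v w n \<longleftrightarrow> (v, w) \<in> (Id \<union> edge_rel L) ^^ n"

definition ballc :: "'v \<Rightarrow> nat \<Rightarrow> 'v cplx \<Rightarrow> 'v cplx" where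
  "ballc v n L = {f \<in> L. \<forall>w\<in>set f. edist_le L v w n}"

definition ball_radii :: "'a cplx \<Rightarrow> 'a \<Rightarrow> 'b cplx \<Rightarrow> 'b \<Rightarrow> nat set" where
  "ball_radii L v L' v' = {n. \<exists>\<phi>. cplx_iso \<phi> (ballc v n L) (ballc v' n L') \<and> \<phi> v = v'}"

text \<open>d' = min(1/n, 1) for the greatest admissible radius n (with 1/0 = \<infinity>),
and 0 if every radius is admissible; written as an infimum.\<close>

definition dprime :: "'a cplx \<Rightarrow> 'a \<Rightarrow> 'b cplx \<Rightarrow> 'b \<Rightarrow> real" where
  "dprime L v L' v' = Inf (insert 1 {1 / real n | n. n \<ge> 1 \<and> n \<in> ball_radii L v L' v'})"

end

theory Submission
  imports Defs
begin

text \<open>Every vertex x of \<omega>(L) lies over the old vertices \<open>set_sv x\<close>: itself, the endpoints of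
its edge, or the corners of its face.  Two adjacent vertices of \<omega>(L) lie in the subdivision of
one face of L, and the corners of a pentagon are pairwise at edge distance at most 2; so a path
of length d in \<omega>(L) starting at v stays over vertices of L within distance 2d of v.  Hence the
M-ball of \<omega>(L) around v is already the M-ball of \<omega>(B), where B is the (2M+2)-ball of L around v.
Since \<omega> commutes with isomorphisms and isomorphisms preserve balls, an isomorphism between the
n-balls of L and L' induces one between the M-balls of \<omega>(L) and \<omega>(L') whenever 2M+2 \<le> n,
i.e. d' < 1/(2N+1) forces d'(\<omega>(L), \<omega>(L')) \<le> 1/N.\<close>

lemma less_5_cases: "(k::nat) < 5 \<longleftrightarrow> k = 0 \<or> k = 1 \<or> k = 2 \<or> k = 3 \<or> k = 4"
  by auto

lemma relpow_image:
  assumes "\<And>a b. (a, b) \<in> R \<Longrightarrow> (f a, f b) \<in> S" and "(a, b) \<in> R ^^ n"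
  shows "(f a, f b) \<in> S ^^ n"
  using assms(2) by (induction n arbitrary: b) (auto elim!: relpow_Suc_E intro: relpow_Suc_I assms(1))

lemma relpow_Id_Un_mono:
  assumes "(a, b) \<in> (Id \<union> R) ^^ m" and "m \<le> n"
  shows "(a, b) \<in> (Id \<union> R) ^^ n"
  using assms(2,1) by (induction n rule: dec_induct) (auto intro: relpow_Suc_I)

lemma edist_le_mono: "edist_le L v w m \<Longrightarrow> m \<le> n \<Longrightarrow> edist_le L v w n"
  unfolding edist_le_def by (rule relpow_Id_Un_mono)

lemma edist_le_refl: "edist_le L v v n"
  using edist_le_mono[of L v v 0 n] by (simp add: edist_le_def)

lemma edist_le_trans: "edist_le L u v m \<Longrightarrow> edist_le L v w n \<Longrightarrow> edist_le L u w (m + n)"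
  unfolding edist_le_def by (rule relpow_trans)

lemma edist_le_Suc:
  "edist_le L v w (Suc n) \<longleftrightarrow> (\<exists>u. edist_le L v u n \<and> (u = w \<or> (u, w) \<in> edge_rel L))"
  unfolding edist_le_def by (auto intro: relpow_Suc_I elim: relpow_Suc_E)

lemma edge_rel_mono: "L \<subseteq> L' \<Longrightarrow> edge_rel L \<subseteq> edge_rel L'"
  unfolding edge_rel_def edges_def by auto

lemma edist_le_subcomplex: "L \<subseteq> L' \<Longrightarrow> edist_le L v w n \<Longrightarrow> edist_le L' v w n"
  unfolding edist_le_def using relpow_image[of "Id \<union> edge_rel L" id "Id \<union> edge_rel L'" v w n]
    edge_rel_mono[of L L'] by auto

lemma ballc_subset: "ballc v n L \<subseteq> L"
  unfolding ballc_def by blast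

lemma ballc_mono: "m \<le> n \<Longrightarrow> ballc v m L \<subseteq> ballc v n L"
  unfolding ballc_def by (auto intro: edist_le_mono)

lemma wf_cplx_subset: "wf_cplx L \<Longrightarrow> L' \<subseteq> L \<Longrightarrow> wf_cplx L'"
  unfolding wf_cplx_def by blast

lemma wf_cplx_length: "wf_cplx L \<Longrightarrow> f \<in> L \<Longrightarrow> length f = 5"
  unfolding wf_cplx_def pface_def by blast

lemma wf_cplx_nth: "wf_cplx L \<Longrightarrow> f \<in> L \<Longrightarrow> w \<in> set f \<Longrightarrow> \<exists>k<5. w = f ! k"
  by (metis in_set_conv_nth wf_cplx_length)

lemma fedges_subset_set: "length f = 5 \<Longrightarrow> e \<in> fedges f \<Longrightarrow> e \<subseteq> set f"
  unfolding fedges_def by auto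

lemma edge_rel_of_fedges: "f \<in> L \<Longrightarrow> {a, b} \<in> fedges f \<Longrightarrow> (a, b) \<in> edge_rel L"
  unfolding edge_rel_def edges_def by blast

lemma edge_rel_face_edge:
  assumes "f \<in> L" "k < 5"
  shows "(f ! k, f ! (Suc k mod 5)) \<in> edge_rel L" "(f ! (Suc k mod 5), f ! k) \<in> edge_rel L"
  using assms unfolding edge_rel_def edges_def fedges_def by (auto simp: insert_commute)

lemma face_diameter:
  assumes "wf_cplx L" "f \<in> L" "a \<in> set f" "b \<in> set f"
  shows "edist_le L a b 2"
proof -
  obtain i k where ik: "i < 5" "k < 5" "a = f ! i" "b = f ! k"
    using wf_cplx_nth[OF assms(1,2)] assms(3,4) by metis
  let ?s = "\<lambda>j. Suc j mod 5"
  have s_less: "?s j < 5" for j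
    by simp
  have fwd: "edist_le L (f ! j) (f ! ?s j) 1" and bwd: "edist_le L (f ! ?s j) (f ! j) 1" if "j < 5" for j
    using edge_rel_face_edge[OF assms(2) that] by (simp_all add: edist_le_def)
  have one_step: "edist_le L x y 2" if "edist_le L x y 1" for x y
    using edist_le_mono[OF that] by simp
  have two_steps: "edist_le L x z 2" if "edist_le L x y 1" "edist_le L y z 1" for x y z
    using edist_le_trans[OF that] by (simp only: one_add_one)
  have "k = i \<or> k = ?s i \<or> k = ?s (?s i) \<or> i = ?s k \<or> i = ?s (?s k)"
    using ik(1,2) unfolding less_5_cases by auto
  then show ?thesis
    unfolding ik(3,4)
  proof (elim disjE)
    assume "k = i"
    then show "edist_le L (f ! i) (f ! k) 2"
      by (simp only: edist_le_refl)
  next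
    assume "k = ?s i"
    then show "edist_le L (f ! i) (f ! k) 2"
      using one_step[OF fwd[OF ik(1)]] by (simp only:)
  next
    assume "k = ?s (?s i)"
    then show "edist_le L (f ! i) (f ! k) 2"
      using two_steps[OF fwd[OF ik(1)] fwd[OF s_less]] by (simp only:)
  next
    assume "i = ?s k"
    then show "edist_le L (f ! i) (f ! k) 2"
      using one_step[OF bwd[OF ik(2)]] by (simp only:)
  next
    assume "i = ?s (?s k)"
    then show "edist_le L (f ! i) (f ! k) 2"
      using two_steps[OF bwd[OF s_less] bwd[OF ik(2)]] by (simp only:)
  qed
qed

lemma face_in_ballc:
  assumes "wf_cplx L" "f \<in> L" "a \<in> set f" "edist_le L v a n"
  shows "f \<in> ballc v (n + 2) L"
  unfolding ballc_def
proof (intro CollectI conjI ballI)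
  fix w assume "w \<in> set f"
  then show "edist_le L v w (n + 2)"
    by (rule edist_le_trans[OF assms(4) face_diameter[OF assms(1-3)]])
qed (rule assms(2))

lemma in_verts_ballc:
  assumes "wf_cplx L" "v \<in> verts L" "2 \<le> n"
  shows "v \<in> verts (ballc v n L)"
proof -
  obtain f where f: "f \<in> L" "v \<in> set f"
    using assms(2) unfolding verts_def by blast
  have "f \<in> ballc v 2 L"
    using face_in_ballc[OF assms(1) f edist_le_refl, of 0] by (simp only: add_0)
  then have "f \<in> ballc v n L"
    by (rule subsetD[OF ballc_mono[OF assms(3)]])
  with f(2) show ?thesis
    unfolding verts_def by blast
qed

lemma central_eq: "central f = [SCen f 4, SCen f 0, SCen f 1, SCen f 2, SCen f 3]"
  by (simp add: central_def upt_rec)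

lemma set_petal:
  "set (petal f i) = {SOld (f ! i), SMid {#f ! i, f ! (Suc i mod 5)#}, SCen f i,
     SCen f ((i + 4) mod 5), SMid {#f ! ((i + 4) mod 5), f ! i#}}"
  by (simp add: petal_def)

lemma map_central: "map (map_sv \<phi>) (central f) = central (map \<phi> f)"
  by (simp add: central_def)

lemma map_petal: "length f = 5 \<Longrightarrow> i < 5 \<Longrightarrow> map (map_sv \<phi>) (petal f i) = petal (map \<phi> f) i"
  by (simp add: petal_def rotate_map[symmetric])

lemma omega_mono: "L \<subseteq> L' \<Longrightarrow> omega L \<subseteq> omega L'"
  unfolding omega_def by blast

lemma omega_parent: "g \<in> omega L \<Longrightarrow> \<exists>f\<in>L. g \<in> omega {f}"
  unfolding omega_def by blast

lemma pface_central: "pface (central f)"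
  by (simp add: pface_def central_eq)

lemma pface_petal: "pface f \<Longrightarrow> i < 5 \<Longrightarrow> pface (petal f i)"
  unfolding pface_def less_5_cases by (auto simp: petal_def nth_eq_iff_index_eq)

lemma wf_cplx_omega: "wf_cplx L \<Longrightarrow> wf_cplx (omega L)"
  unfolding wf_cplx_def omega_def using pface_central pface_petal by blast

lemma set_sv_omega_vertex:
  assumes "length f = 5" "g \<in> omega {f}" "y \<in> set g"
  shows "set_sv y \<noteq> {}" "set_sv y \<subseteq> set f"
proof -
  have "f ! j \<in> set f" if "j < 5" for j
    using assms(1) that by simp
  moreover have "f ! (j mod 5) \<in> set f" for j
    using assms(1) by simp
  ultimately show "set_sv y \<noteq> {}" "set_sv y \<subseteq> set f"
    using assms unfolding omega_def by (auto simp: central_eq set_petal)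
qed

lemma SOld_in_verts_omega:
  assumes "wf_cplx L" "v \<in> verts L"
  shows "SOld v \<in> verts (omega L)"
proof -
  obtain f where f: "f \<in> L" "v \<in> set f"
    using assms(2) unfolding verts_def by blast
  then obtain k where k: "k < 5" "v = f ! k"
    using wf_cplx_nth[OF assms(1)] by blast
  have "petal f k \<in> omega L"
    using f(1) k(1) unfolding omega_def by blast
  moreover have "SOld v \<in> set (petal f k)"
    unfolding set_petal k(2) by simp
  ultimately show ?thesis
    unfolding verts_def by blast
qed

lemma omega_image:
  assumes "wf_cplx L"
  shows "omega (map \<phi> ` L) = map (map_sv \<phi>) ` omega L"
proof -
  have "{petal f i |f i. f \<in> map \<phi> ` L \<and> i < 5} = map (map_sv \<phi>) ` {petal f i |f i. f \<in> L \<and> i < 5}"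
  proof (intro equalityI subsetI)
    fix g assume "g \<in> {petal f i |f i. f \<in> map \<phi> ` L \<and> i < 5}"
    then obtain f i where fi: "f \<in> L" "i < 5" "g = petal (map \<phi> f) i"
      by blast
    then have "g = map (map_sv \<phi>) (petal f i)"
      using map_petal[OF wf_cplx_length[OF assms fi(1)] fi(2), of \<phi>] by simp
    with fi(1,2) show "g \<in> map (map_sv \<phi>) ` {petal f i |f i. f \<in> L \<and> i < 5}"
      by blast
  next
    fix g assume "g \<in> map (map_sv \<phi>) ` {petal f i |f i. f \<in> L \<and> i < 5}"
    then obtain f i where fi: "f \<in> L" "i < 5" "g = map (map_sv \<phi>) (petal f i)"
      by blast
    then have "g = petal (map \<phi> f) i"
      using map_petal[OF wf_cplx_length[OF assms fi(1)] fi(2), of \<phi>] by simp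
    with fi(1,2) show "g \<in> {petal f i |f i. f \<in> map \<phi> ` L \<and> i < 5}"
      by blast
  qed
  moreover have "central ` map \<phi> ` L = map (map_sv \<phi>) ` central ` L"
    by (simp add: image_image map_central)
  ultimately show ?thesis
    unfolding omega_def by (simp add: image_Un)
qed

lemma edge_rel_omegaE:
  assumes "wf_cplx L" "(x, y) \<in> edge_rel (omega L)"
  obtains f g where "f \<in> L" "g \<in> omega {f}" "{x, y} \<in> fedges g" "x \<in> set g" "y \<in> set g"
proof -
  obtain g where g: "g \<in> omega L" "{x, y} \<in> fedges g"
    using assms(2) unfolding edge_rel_def edges_def by blast
  obtain f where "f \<in> L" "g \<in> omega {f}"
    using omega_parent[OF g(1)] by blast
  moreover have "{x, y} \<subseteq> set g"
    using fedges_subset_set[OF wf_cplx_length[OF wf_cplx_omega[OF assms(1)] g(1)] g(2)] .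
  ultimately show ?thesis
    using that g(2) by blast
qed

lemma edist_le_from_omega:
  assumes "wf_cplx L" "edist_le (omega L) (SOld v) x d" "a \<in> set_sv x"
  shows "edist_le L v a (2 * d)"
  using assms(2,3)
proof (induction d arbitrary: x a)
  case 0
  then have "x = SOld v"
    by (simp add: edist_le_def)
  with 0 show ?case
    by (simp add: edist_le_refl)
next
  case (Suc d)
  obtain u where u: "edist_le (omega L) (SOld v) u d" "u = x \<or> (u, x) \<in> edge_rel (omega L)"
    using Suc.prems(1) unfolding edist_le_Suc by blast
  show ?case
    using u(2)
  proof
    assume "u = x"
    then have "edist_le L v a (2 * d)"
      using Suc.IH[OF u(1)] Suc.prems(2) by simp
    then show ?thesis
      by (rule edist_le_mono) simp
  next
    assume "(u, x) \<in> edge_rel (omega L)"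
    then obtain f g where fg: "f \<in> L" "g \<in> omega {f}" "u \<in> set g" "x \<in> set g"
      using edge_rel_omegaE[OF assms(1)] by blast
    have len: "length f = 5"
      by (rule wf_cplx_length[OF assms(1) fg(1)])
    obtain b where b: "b \<in> set_sv u"
      using set_sv_omega_vertex(1)[OF len fg(2,3)] by blast
    have "edist_le L b a 2"
      using face_diameter[OF assms(1) fg(1)] set_sv_omega_vertex(2)[OF len fg(2)] fg(3,4)
        b Suc.prems(2) by (meson subsetD)
    with Suc.IH[OF u(1) b] have "edist_le L v a (2 * d + 2)"
      by (rule edist_le_trans)
    then show ?thesis
      by simp
  qed
qed

lemma omega_parent_in_ballc:
  assumes "wf_cplx L" "f \<in> L" "g \<in> omega {f}" "u \<in> set g" "edist_le (omega L) (SOld v) u d"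
  shows "f \<in> ballc v (2 * d + 2) L"
proof -
  have len: "length f = 5"
    by (rule wf_cplx_length[OF assms(1,2)])
  obtain b where b: "b \<in> set_sv u"
    using set_sv_omega_vertex(1)[OF len assms(3,4)] by blast
  have "b \<in> set f"
    using set_sv_omega_vertex(2)[OF len assms(3,4)] b by (rule subsetD)
  then show ?thesis
    by (rule face_in_ballc[OF assms(1,2) _ edist_le_from_omega[OF assms(1,5) b]])
qed

lemma edist_le_omega_local:
  assumes "wf_cplx L" "edist_le (omega L) (SOld v) x d" "2 * d \<le> n"
  shows "edist_le (omega (ballc v n L)) (SOld v) x d"
  using assms(2,3)
proof (induction d arbitrary: x)
  case 0
  then show ?case
    by (simp add: edist_le_def)
next
  case (Suc d)
  obtain u where u: "edist_le (omega L) (SOld v) u d" "u = x \<or> (u, x) \<in> edge_rel (omega L)"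
    using Suc.prems(1) unfolding edist_le_Suc by blast
  have IH: "edist_le (omega (ballc v n L)) (SOld v) u d"
    using Suc.IH[OF u(1)] Suc.prems(2) by simp
  have "u = x \<or> (u, x) \<in> edge_rel (omega (ballc v n L))"
    using u(2)
  proof
    assume "(u, x) \<in> edge_rel (omega L)"
    then obtain f g where fg: "f \<in> L" "g \<in> omega {f}" "{u, x} \<in> fedges g" "u \<in> set g"
      using edge_rel_omegaE[OF assms(1)] by blast
    have "f \<in> ballc v (2 * d + 2) L"
      by (rule omega_parent_in_ballc[OF assms(1) fg(1,2,4) u(1)])
    then have "{f} \<subseteq> ballc v n L"
      using subsetD[OF ballc_mono[of "2 * d + 2" n]] Suc.prems(2) by simp
    then have "g \<in> omega (ballc v n L)"
      using omega_mono fg(2) by blast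
    then have "(u, x) \<in> edge_rel (omega (ballc v n L))"
      using fg(3) by (rule edge_rel_of_fedges)
    then show ?thesis ..
  qed simp
  with IH show ?case
    unfolding edist_le_Suc by blast
qed

lemma ballc_omega_local:
  assumes "wf_cplx L" "2 * M + 2 \<le> n"
  shows "ballc (SOld v) M (omega L) = ballc (SOld v) M (omega (ballc v n L))"
proof (intro equalityI subsetI)
  fix g assume g: "g \<in> ballc (SOld v) M (omega L)"
  then have gL: "g \<in> omega L" and dist: "\<And>w. w \<in> set g \<Longrightarrow> edist_le (omega L) (SOld v) w M"
    unfolding ballc_def by auto
  obtain f where f: "f \<in> L" "g \<in> omega {f}"
    using omega_parent[OF gL] by blast
  have "length g = 5"
    by (rule wf_cplx_length[OF wf_cplx_omega[OF assms(1)] gL])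
  then have g0: "g ! 0 \<in> set g"
    by simp
  have "f \<in> ballc v (2 * M + 2) L"
    by (rule omega_parent_in_ballc[OF assms(1) f g0 dist[OF g0]])
  then have "{f} \<subseteq> ballc v n L"
    using subsetD[OF ballc_mono[OF assms(2)]] by simp
  then have "g \<in> omega (ballc v n L)"
    using omega_mono f(2) by blast
  moreover have "edist_le (omega (ballc v n L)) (SOld v) w M" if "w \<in> set g" for w
    using edist_le_omega_local[OF assms(1) dist[OF that]] assms(2) by simp
  ultimately show "g \<in> ballc (SOld v) M (omega (ballc v n L))"
    unfolding ballc_def by blast
next
  fix g assume g: "g \<in> ballc (SOld v) M (omega (ballc v n L))"
  have sub: "omega (ballc v n L) \<subseteq> omega L"
    by (rule omega_mono[OF ballc_subset])
  show "g \<in> ballc (SOld v) M (omega L)"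
    using g sub edist_le_subcomplex[OF sub] unfolding ballc_def[of "SOld v"] by auto
qed

lemma verts_mono: "L \<subseteq> L' \<Longrightarrow> verts L \<subseteq> verts L'"
  unfolding verts_def by blast

lemma verts_image: "verts (map \<phi> ` L) = \<phi> ` verts L"
  unfolding verts_def by auto

lemma fedges_eq_image: "fedges f = (\<lambda>k. {f ! k, f ! (Suc k mod 5)}) ` {..<5}"
  unfolding fedges_def by auto

lemma fedges_map: "length f = 5 \<Longrightarrow> fedges (map \<phi> f) = image \<phi> ` fedges f"
  unfolding fedges_eq_image image_image by (intro image_cong) auto

lemma edge_rel_image:
  assumes "wf_cplx L" "(a, b) \<in> edge_rel L"
  shows "(\<phi> a, \<phi> b) \<in> edge_rel (map \<phi> ` L)"
proof -
  obtain f where f: "f \<in> L" "{a, b} \<in> fedges f"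
    using assms(2) unfolding edge_rel_def edges_def by blast
  have "map \<phi> f \<in> map \<phi> ` L"
    using f(1) by (rule imageI)
  moreover have "image \<phi> {a, b} \<in> fedges (map \<phi> f)"
    unfolding fedges_map[OF wf_cplx_length[OF assms(1) f(1)]] using f(2) by (rule imageI)
  ultimately show ?thesis
    by (simp add: edge_rel_of_fedges)
qed

lemma edist_le_image:
  assumes "wf_cplx L" "edist_le L v w n"
  shows "edist_le (map \<phi> ` L) (\<phi> v) (\<phi> w) n"
proof -
  have "(\<phi> a, \<phi> b) \<in> Id \<union> edge_rel (map \<phi> ` L)" if "(a, b) \<in> Id \<union> edge_rel L" for a b
    using that edge_rel_image[OF assms(1)] by auto
  then show ?thesis
    using assms(2) unfolding edist_le_def by (rule relpow_image)
qed

lemma cplx_iso_inv: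
  assumes "cplx_iso \<phi> C D"
  shows "cplx_iso (inv_into (verts C) \<phi>) D C"
proof -
  have D: "D = map \<phi> ` C" and inj: "inj_on \<phi> (verts C)"
    using assms unfolding cplx_iso_def by auto
  have "map (inv_into (verts C) \<phi>) (map \<phi> f) = f" if "f \<in> C" for f
  proof -
    have "set f \<subseteq> verts C"
      using that unfolding verts_def by blast
    then show ?thesis
      unfolding map_map by (intro map_idI) (auto intro: inv_into_f_f[OF inj])
  qed
  then have "map (inv_into (verts C) \<phi>) ` D = C"
    unfolding D image_image by simp
  moreover have "inj_on (inv_into (verts C) \<phi>) (verts D)"
    unfolding D verts_image by (rule inj_on_inv_into) (rule subset_refl)
  ultimately show ?thesis
    unfolding cplx_iso_def by blast
qed

lemma wf_cplx_iso:
  assumes "wf_cplx C" "cplx_iso \<phi> C D"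
  shows "wf_cplx D"
  unfolding wf_cplx_def
proof
  fix g assume "g \<in> D"
  then obtain f where f: "f \<in> C" "g = map \<phi> f"
    using assms(2) unfolding cplx_iso_def by blast
  have "set f \<subseteq> verts C"
    using f(1) unfolding verts_def by blast
  moreover have "inj_on \<phi> (verts C)"
    using assms(2) unfolding cplx_iso_def by blast
  ultimately have "inj_on \<phi> (set f)"
    by (simp add: inj_on_subset)
  then show "pface g"
    using assms(1) f unfolding wf_cplx_def pface_def by (simp add: distinct_map)
qed

lemma cplx_iso_ballc:
  assumes "wf_cplx C" "cplx_iso \<psi> C D" "c \<in> verts C"
  shows "cplx_iso \<psi> (ballc c M C) (ballc (\<psi> c) M D)"
proof -
  have D: "D = map \<psi> ` C" and inj: "inj_on \<psi> (verts C)"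
    using assms(2) unfolding cplx_iso_def by auto
  define \<theta> where "\<theta> = inv_into (verts C) \<psi>"
  have C_eq: "map \<theta> ` D = C"
    using cplx_iso_inv[OF assms(2)] unfolding cplx_iso_def \<theta>_def by blast
  have \<theta>\<psi>: "\<theta> (\<psi> x) = x" if "x \<in> verts C" for x
    unfolding \<theta>_def using inj that by (rule inv_into_f_f)
  have wfD: "wf_cplx D"
    by (rule wf_cplx_iso[OF assms(1,2)])
  have "map \<psi> ` ballc c M C = ballc (\<psi> c) M D"
  proof (intro equalityI subsetI)
    fix g assume "g \<in> map \<psi> ` ballc c M C"
    then obtain f where f: "f \<in> C" "\<forall>w\<in>set f. edist_le C c w M" "g = map \<psi> f"
      unfolding ballc_def by blast
    have "edist_le D (\<psi> c) (\<psi> w) M" if "w \<in> set f" for w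
      unfolding D using f(2) that by (intro edist_le_image[OF assms(1)]) blast
    moreover have "map \<psi> f \<in> D"
      unfolding D using f(1) by (rule imageI)
    ultimately show "g \<in> ballc (\<psi> c) M D"
      unfolding ballc_def f(3) by simp
  next
    fix g assume g: "g \<in> ballc (\<psi> c) M D"
    then have gD: "g \<in> D" and gd: "\<forall>w\<in>set g. edist_le D (\<psi> c) w M"
      unfolding ballc_def by auto
    obtain f where f: "f \<in> C" "g = map \<psi> f"
      using gD unfolding D by blast
    have "edist_le C c w M" if "w \<in> set f" for w
    proof -
      have w: "w \<in> verts C"
        using f(1) that unfolding verts_def by blast
      have "edist_le D (\<psi> c) (\<psi> w) M"
        using gd that unfolding f(2) by simp
      then have "edist_le (map \<theta> ` D) (\<theta> (\<psi> c)) (\<theta> (\<psi> w)) M"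
        by (rule edist_le_image[OF wfD, where \<phi> = \<theta>])
      then show ?thesis
        by (simp only: C_eq \<theta>\<psi>[OF assms(3)] \<theta>\<psi>[OF w])
    qed
    with f(1) have "f \<in> ballc c M C"
      unfolding ballc_def by blast
    then show "g \<in> map \<psi> ` ballc c M C"
      unfolding f(2) by (rule imageI)
  qed
  moreover have "verts (ballc c M C) \<subseteq> verts C"
    by (rule verts_mono[OF ballc_subset])
  then have "inj_on \<psi> (verts (ballc c M C))"
    using inj by (rule inj_on_subset[rotated])
  ultimately show ?thesis
    unfolding cplx_iso_def by blast
qed

lemma inj_on_map_sv: "inj_on \<phi> A \<Longrightarrow> inj_on (map_sv \<phi>) {x. set_sv x \<subseteq> A}"
  by (rule inj_onI) (erule sv.inj_map_strong[rotated], auto dest: inj_onD)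

lemma cplx_iso_omega:
  assumes "wf_cplx B" "cplx_iso \<phi> B B'"
  shows "cplx_iso (map_sv \<phi>) (omega B) (omega B')"
proof -
  have B': "B' = map \<phi> ` B" and inj: "inj_on \<phi> (verts B)"
    using assms(2) unfolding cplx_iso_def by auto
  have "verts (omega B) \<subseteq> {x. set_sv x \<subseteq> verts B}"
  proof
    fix x assume "x \<in> verts (omega B)"
    then obtain g where g: "g \<in> omega B" "x \<in> set g"
      unfolding verts_def by blast
    then obtain f where f: "f \<in> B" "g \<in> omega {f}"
      using omega_parent by blast
    have "set_sv x \<subseteq> set f"
      by (rule set_sv_omega_vertex(2)[OF wf_cplx_length[OF assms(1) f(1)] f(2) g(2)])
    moreover have "set f \<subseteq> verts B"
      using f(1) unfolding verts_def by blast
    ultimately show "x \<in> {x. set_sv x \<subseteq> verts B}"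
      by blast
  qed
  then have "inj_on (map_sv \<phi>) (verts (omega B))"
    by (rule inj_on_subset[OF inj_on_map_sv[OF inj]])
  moreover have "map (map_sv \<phi>) ` omega B = omega B'"
    unfolding B' by (rule omega_image[OF assms(1), symmetric])
  ultimately show ?thesis
    unfolding cplx_iso_def by blast
qed

lemma cplx_iso_ballc_omega:
  assumes "wf_cplx L" "wf_cplx L'" "v \<in> verts L"
    and "cplx_iso \<phi> (ballc v n L) (ballc v' n L')" "\<phi> v = v'" "2 * M + 2 \<le> n"
  shows "cplx_iso (map_sv \<phi>) (ballc (SOld v) M (omega L)) (ballc (SOld v') M (omega L'))"
proof -
  have wfB: "wf_cplx (ballc v n L)"
    by (rule wf_cplx_subset[OF assms(1) ballc_subset])
  have "v \<in> verts (ballc v n L)"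
    using assms(6) by (intro in_verts_ballc[OF assms(1,3)]) simp
  then have "SOld v \<in> verts (omega (ballc v n L))"
    by (rule SOld_in_verts_omega[OF wfB])
  with wf_cplx_omega[OF wfB] cplx_iso_omega[OF wfB assms(4)]
  have "cplx_iso (map_sv \<phi>) (ballc (SOld v) M (omega (ballc v n L)))
      (ballc (map_sv \<phi> (SOld v)) M (omega (ballc v' n L')))"
    by (rule cplx_iso_ballc)
  then show ?thesis
    unfolding ballc_omega_local[OF assms(1,6)] ballc_omega_local[OF assms(2,6)]
    using assms(5) by simp
qed

lemma dprime_le:
  assumes "1 \<le> n" "n \<in> ball_radii L v L' v'"
  shows "dprime L v L' v' \<le> 1 / real n"
  unfolding dprime_def using assms by (intro cInf_lower) (auto intro: bdd_belowI[of _ 0])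

lemma ball_radii_of_dprime_less:
  assumes "dprime L v L' v' < 1 / real N" "1 \<le> N"
  shows "\<exists>n>N. n \<in> ball_radii L v L' v'"
proof -
  let ?S = "insert 1 {1 / real n |n. 1 \<le> n \<and> n \<in> ball_radii L v L' v'}"
  obtain s where s: "s \<in> ?S" "s < 1 / real N"
    using cInf_lessD[of ?S] assms(1) unfolding dprime_def by blast
  have "1 / real N \<le> 1"
    using assms(2) by simp
  with s obtain n where n: "s = 1 / real n" "1 \<le> n" "n \<in> ball_radii L v L' v'"
    by auto
  have "N < n"
  proof (rule ccontr)
    assume "\<not> N < n"
    then have "1 / real N \<le> 1 / real n"
      using n(2) by (intro divide_left_mono) auto
    with s(2) n(1) show False
      by simp
  qed
  with n(3) show ?thesis
    by blast
qed

lemma ball_radii_omega: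
  assumes "wf_cplx L" "wf_cplx L'" "v \<in> verts L"
    and "n \<in> ball_radii L v L' v'" "2 * M + 2 \<le> n"
  shows "M \<in> ball_radii (omega L) (SOld v) (omega L') (SOld v')"
proof -
  obtain \<phi> where \<phi>: "cplx_iso \<phi> (ballc v n L) (ballc v' n L')" "\<phi> v = v'"
    using assms(4) unfolding ball_radii_def by blast
  have "cplx_iso (map_sv \<phi>) (ballc (SOld v) M (omega L)) (ballc (SOld v') M (omega L'))"
    by (rule cplx_iso_ballc_omega[OF assms(1-3) \<phi> assms(5)])
  moreover have "map_sv \<phi> (SOld v) = SOld v'"
    using \<phi>(2) by simp
  ultimately show ?thesis
    unfolding ball_radii_def by blast
qed

theorem theoreml:
  fixes L :: "'v cplx" and v :: 'v and \<epsilon> :: real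
  assumes "inXi L v" and "\<epsilon> > 0"
  shows "\<exists>\<delta>>0. \<forall>L' v'. inXi L' v' \<and> dprime L v L' v' < \<delta> \<longrightarrow>
           dprime (omega L) (SOld v) (omega L') (SOld v') < \<epsilon>"
proof -
  obtain m where m: "inverse (real (Suc m)) < \<epsilon>"
    using reals_Archimedean[OF assms(2)] by blast
  define N where "N = Suc m"
  have wfL: "wf_cplx L" and vL: "v \<in> verts L"
    using assms(1) unfolding inXi_def tiling_def by auto
  have "dprime (omega L) (SOld v) (omega L') (SOld v') < \<epsilon>"
    if close: "inXi L' v'" "dprime L v L' v' < 1 / real (2 * N + 1)" for L' v'
  proof -
    have wfL': "wf_cplx L'"
      using close(1) unfolding inXi_def tiling_def by auto
    obtain n where "2 * N + 1 < n" "n \<in> ball_radii L v L' v'"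
      using ball_radii_of_dprime_less[OF close(2)] by auto
    then have "N \<in> ball_radii (omega L) (SOld v) (omega L') (SOld v')"
      by (intro ball_radii_omega[OF wfL wfL' vL]) auto
    then have "dprime (omega L) (SOld v) (omega L') (SOld v') \<le> 1 / real N"
      by (rule dprime_le[rotated]) (simp add: N_def)
    also have "\<dots> < \<epsilon>"
      using m by (simp add: N_def inverse_eq_divide)
    finally show ?thesis .
  qed
  then show ?thesis
    by (intro exI[of _ "1 / real (2 * N + 1)"]) auto
qed

end
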